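(* Let $f:U\to\mathbb{R}^3$ be a Guichard net and $\hat f$ an associated system of $f$ given by $d\hat f=\sum_{m=1}^3h_m\partial_mf\,dx_m$. For $(i,j,k)$ a permutation of $(1,2,3)$ the following are equivalent: (i) the coordinate surfaces $x_i=\mathrm{const}$ of $f$ are parallel; (ii) the coordinate surfaces $x_i=\mathrm{const}$ of $\hat f$ are parallel; (iii) $\partial_jh_i=\partial_kh_i=0$.
   Context: $U\subset\mathbb{R}^3$ open connected, coordinates $(x_1,x_2,x_3)=(x,y,z)$, $\partial_i=\partial_{x_i}$. A triply orthogonal system is $f:U\to\mathbb{R}^3$ with $\det(\partial_1f,\partial_2f,\partial_3f)\ne0$ and $(\partial_if,\partial_jf)=0$ for $i\ne j$. For $(i,j,k)$ cyclic, $N_i=\partial_jf\times\partial_kf/|\cdot|$, Lamé coefficients $H_i$ by $\partial_if=H_iN_i$, rotational coefficients $\beta_{ij}=\frac1{H_i}\partial_iH_j$, and $\kappa_{ij}=-\beta_{ij}/H_j$ (principal curvature of $x_i=\mathrm{const}$ along $x_j$-lines). A Guichard net satisfies $H_1^2+H_2^2-H_3^2=0$. Its associated systems are $\hat f$ with $d\hat f=\sum h_m\partial_mf\,dx_m$, where $(h_1,h_2,h_3)$ solves $\partial_xh_3=-\frac{H_2}{H_3}\kappa_{13}$, $\partial_yh_3=\frac{H_1}{H_3}\kappa_{23}$, $\partial_zh_3=-\frac{H_1H_2}{H_3^2}(\kappa_{31}-\kappa_{32})$, $h_1=h_3+\frac{H_2}{H_1H_3}$, $h_2=h_3-\frac{H_1}{H_2H_3}$;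 $\hat f$ is a triply orthogonal system with Lamé coefficients $h_mH_m$ and the same rotational coefficients as $f$. A family of coordinate surfaces $x_i=\mathrm{const}$ is parallel if its members are parallel surfaces of each other. *)

theory Defs
  imports "HOL-Analysis.Analysis"
begin

text \<open>Coordinates of R^3 are indexed by the numeral type 3 with elements 1, 2, 3
  (arithmetic mod 3, so for an index i the cyclic successors are i+1 and i+2).\<close>

definition pd :: "3 \<Rightarrow> (real^3 \<Rightarrow> 'a::real_normed_vector) \<Rightarrow> real^3 \<Rightarrow> 'a" where
  "pd i g x = vector_derivative (\<lambda>t. g (x + t *\<^sub>R axis i 1)) (at 0)"

fun ipd :: "3 list \<Rightarrow> (real^3 \<Rightarrow> 'a::real_normed_vector) \<Rightarrow> real^3 \<Rightarrow> 'a" where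
  "ipd [] g = g"
| "ipd (i # is) g = pd i (ipd is g)"

definition smooth_on :: "(real^3) set \<Rightarrow> (real^3 \<Rightarrow> 'a::real_normed_vector) \<Rightarrow> bool" where
  "smooth_on U g \<longleftrightarrow>
     (\<forall>is. continuous_on U (ipd is g) \<and>
        (\<forall>x\<in>U. \<forall>i. (\<lambda>t. ipd is g (x + t *\<^sub>R axis i 1)) differentiable (at 0)))"

definition triply_orthogonal :: "(real^3) set \<Rightarrow> (real^3 \<Rightarrow> real^3) \<Rightarrow> bool" where
  "triply_orthogonal U f \<longleftrightarrow> smooth_on U f \<and>
     (\<forall>x\<in>U. det (\<chi> m. pd m f x) \<noteq> 0 \<and> (\<forall>a b. a \<noteq> b \<longrightarrow> pd a f x \<bullet> pd b f x = 0))"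

definition unormal :: "(real^3 \<Rightarrow> real^3) \<Rightarrow> 3 \<Rightarrow> real^3 \<Rightarrow> real^3" where
  "unormal f i x = (let c = cross3 (pd (i+1) f x) (pd (i+2) f x) in (1 / norm c) *\<^sub>R c)"

text \<open>Lame coefficient H_i, defined by d_i f = H_i N_i.\<close>
definition lame :: "(real^3 \<Rightarrow> real^3) \<Rightarrow> 3 \<Rightarrow> real^3 \<Rightarrow> real" where
  "lame f i x = pd i f x \<bullet> unormal f i x"

definition rotc :: "(real^3 \<Rightarrow> real^3) \<Rightarrow> 3 \<Rightarrow> 3 \<Rightarrow> real^3 \<Rightarrow> real" where
  "rotc f i j x = pd i (lame f j) x / lame f i x"

definition kappa :: "(real^3 \<Rightarrow> real^3) \<Rightarrow> 3 \<Rightarrow> 3 \<Rightarrow> real^3 \<Rightarrow> real" where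
  "kappa f i j x = - rotc f i j x / lame f j x"

definition guichard_net :: "(real^3) set \<Rightarrow> (real^3 \<Rightarrow> real^3) \<Rightarrow> bool" where
  "guichard_net U f \<longleftrightarrow> triply_orthogonal U f \<and>
     (\<forall>x\<in>U. (lame f 1 x)\<^sup>2 + (lame f 2 x)\<^sup>2 - (lame f 3 x)\<^sup>2 = 0)"

definition associated_system ::
  "(real^3) set \<Rightarrow> (real^3 \<Rightarrow> real^3) \<Rightarrow> (3 \<Rightarrow> real^3 \<Rightarrow> real) \<Rightarrow> (real^3 \<Rightarrow> real^3) \<Rightarrow> bool" where
  "associated_system U f h fhat \<longleftrightarrow>
     (\<forall>x\<in>U.
        h 3 differentiable (at x) \<and>
        pd 1 (h 3) x = - (lame f 2 x / lame f 3 x) * kappa f 1 3 x \<and>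
        pd 2 (h 3) x = (lame f 1 x / lame f 3 x) * kappa f 2 3 x \<and>
        pd 3 (h 3) x = - (lame f 1 x * lame f 2 x / (lame f 3 x)\<^sup>2)
                          * (kappa f 3 1 x - kappa f 3 2 x) \<and>
        h 1 x = h 3 x + lame f 2 x / (lame f 1 x * lame f 3 x) \<and>
        h 2 x = h 3 x - lame f 1 x / (lame f 2 x * lame f 3 x) \<and>
        (fhat has_derivative (\<lambda>v. \<Sum>m\<in>UNIV. (v $ m * h m x) *\<^sub>R pd m f x)) (at x))"

text \<open>The family of coordinate surfaces x_i = const of g is parallel: locally (around every
  point), any two members are parallel surfaces of each other, i.e. the member x_i = c' is
  obtained from the member x_i = c by moving a constant distance d(c,c') along the unit normal
  N_i (corresponding points lying on a common x_i-line, the common normal line).\<close>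
definition parallel_family :: "(real^3) set \<Rightarrow> (real^3 \<Rightarrow> real^3) \<Rightarrow> 3 \<Rightarrow> bool" where
  "parallel_family U g i \<longleftrightarrow>
     (\<forall>x\<in>U. \<exists>e>0. ball x e \<subseteq> U \<and>
        (\<exists>d::real \<Rightarrow> real \<Rightarrow> real. \<forall>y\<in>ball x e. \<forall>s.
           y + s *\<^sub>R axis i 1 \<in> ball x e \<longrightarrow>
           g (y + s *\<^sub>R axis i 1) = g y + d (y $ i) (y $ i + s) *\<^sub>R unormal g i y))"

end

theory Submission
  imports Defs
begin

(*
  For a triply orthogonal system g, the surfaces x_i = const are parallel iff the metric
  coefficient |d_i g|^2 does not depend on x_j, x_k.  Necessity: for parallel surfaces
  d_i g = D N_i with D depending on x_i only.  Sufficiency: differentiating d_i g . d_j g = 0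
  along x_i and using d_j d_i g . d_i g = d_j |d_i g|^2 / 2 = 0 shows that d_i d_i g is parallel
  to d_i g, so the unit tangent is constant along x_i-lines; on a box the sign of H_i is
  constant, hence d_i g = +-|d_i g| N_i with N_i fixed along the line, which integrates to a
  displacement depending only on the two values of x_i.

  For the associated system d_m fhat = h_m d_m f.  Expanding d_j d_i fhat = d_i d_j fhat and
  pairing with d_i f gives, for c = d_j d_i f . d_i f,
    d_j |d_i f|^2 = 2 c,    d_j |d_i fhat|^2 = 2 h_i h_j c,    d_j h_i |d_i f|^2 = (h_j - h_i) c.
  The h_m are nonzero and pairwise distinct, so all three conditions say c = 0.
*)

lemma exhaust_3_cyclic: "(m::3) = i \<or> m = i + 1 \<or> m = i + 2"
  using exhaust_3[of m] exhaust_3[of i] by auto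

lemma cyclic_indices_distinct:
  "(i::3) + 1 \<noteq> i" "i + 2 \<noteq> i" "i + 1 \<noteq> i + 2" "i \<noteq> i + 1" "i \<noteq> i + 2"
  using exhaust_3[of i] by auto

section \<open>Partial derivatives along coordinate lines\<close>

definition coordinate_differentiable_on ::
  "(real^3) set \<Rightarrow> (real^3 \<Rightarrow> 'a::real_normed_vector) \<Rightarrow> bool" where
  "coordinate_differentiable_on U F \<longleftrightarrow>
     (\<forall>x\<in>U. \<forall>m. (\<lambda>t. F (x + t *\<^sub>R axis m 1)) differentiable (at 0))"

lemma coordinate_differentiable_on_subset:
  "coordinate_differentiable_on U F \<Longrightarrow> V \<subseteq> U \<Longrightarrow> coordinate_differentiable_on V F"
  by (auto simp: coordinate_differentiable_on_def)

lemma smooth_onD: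
  assumes "smooth_on U F"
  shows "coordinate_differentiable_on U F" "coordinate_differentiable_on U (pd m F)"
    "continuous_on U (pd m F)" "continuous_on U (pd a (pd b F))"
  using assms unfolding smooth_on_def coordinate_differentiable_on_def
  by (metis ipd.simps)+

lemma open_line_preimage:
  fixes z v :: "'a::real_normed_vector"
  assumes "open U"
  shows "open {t::real. z + t *\<^sub>R v \<in> U}"
proof -
  have "continuous_on UNIV (\<lambda>t::real. z + t *\<^sub>R v)" by (intro continuous_intros)
  then have "open ((\<lambda>t::real. z + t *\<^sub>R v) -` U)"
    using assms by (simp add: continuous_on_open_vimage)
  then show ?thesis by (simp add: vimage_def)
qed

lemma convex_line_preimage:
  fixes y v :: "'a::real_vector"
  assumes "convex C"
  shows "convex {t::real. y + t *\<^sub>R v \<in> C}"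
  unfolding convex_def
proof (intro ballI allI impI, simp)
  fix s t u w :: real
  assume "y + s *\<^sub>R v \<in> C" "y + t *\<^sub>R v \<in> C" "0 \<le> u" "0 \<le> w" "u + w = 1"
  then have "u *\<^sub>R (y + s *\<^sub>R v) + w *\<^sub>R (y + t *\<^sub>R v) \<in> C"
    using assms unfolding convex_def by blast
  moreover have "u *\<^sub>R (y + s *\<^sub>R v) + w *\<^sub>R (y + t *\<^sub>R v) = y + (u * s + w * t) *\<^sub>R v"
    using \<open>u + w = 1\<close> by (simp add: algebra_simps flip: scaleR_add_left)
  ultimately show "y + (u * s + w * t) *\<^sub>R v \<in> C" by simp
qed

lemma has_vector_derivative_0_imp_eq:
  fixes \<Phi> :: "real \<Rightarrow> 'a::real_normed_vector"
  assumes "convex J" "\<And>t. t \<in> J \<Longrightarrow> (\<Phi> has_vector_derivative 0) (at t)" "a \<in> J" "b \<in> J"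
  shows "\<Phi> a = \<Phi> b"
  using has_vector_derivative_zero_constant[OF assms(1)] assms(2-4) has_vector_derivative_at_within
  by metis

lemma has_vector_derivative_line_shift:
  fixes v y z :: "'a::real_normed_vector"
  assumes "((\<lambda>s. F (z + s *\<^sub>R v)) has_vector_derivative D) (at 0)" and "z = y + t0 *\<^sub>R v"
  shows "((\<lambda>t. F (y + t *\<^sub>R v)) has_vector_derivative D) (at t0)"
proof -
  have shift: "((\<lambda>t::real. t - t0) has_vector_derivative 1) (at t0)"
    by (auto intro!: derivative_eq_intros
        simp: has_real_derivative_iff_has_vector_derivative[symmetric])
  have "((\<lambda>s. F (z + s *\<^sub>R v)) has_vector_derivative D) (at ((\<lambda>t::real. t - t0) t0))"
    using assms(1) by simp
  from vector_diff_chain_at[OF shift this]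
  have "((\<lambda>t. F (z + (t - t0) *\<^sub>R v)) has_vector_derivative D) (at t0)"
    by (simp add: o_def)
  moreover have "z + (t - t0) *\<^sub>R v = y + t *\<^sub>R v" for t
    using assms(2) by (simp add: algebra_simps)
  ultimately show ?thesis by simp
qed

lemma has_vector_derivative_pd:
  assumes "coordinate_differentiable_on U F" "y \<in> U"
  shows "((\<lambda>t. F (y + t *\<^sub>R axis m 1)) has_vector_derivative pd m F y) (at 0)"
  using assms unfolding coordinate_differentiable_on_def pd_def
  by (simp add: vector_derivative_works[symmetric])

lemma has_vector_derivative_pd_line:
  assumes "coordinate_differentiable_on U F" "y + t *\<^sub>R axis m 1 \<in> U"
  shows "((\<lambda>s. F (y + s *\<^sub>R axis m 1)) has_vector_derivative pd m F (y + t *\<^sub>R axis m 1)) (at t)"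
  by (rule has_vector_derivative_line_shift[OF has_vector_derivative_pd[OF assms]]) simp

lemma pd_cong:
  assumes "open U" "x \<in> U" "\<And>y. y \<in> U \<Longrightarrow> F y = G y"
  shows "pd m F x = pd m G x"
proof -
  let ?S = "{t::real. x + t *\<^sub>R axis m 1 \<in> U}"
  have S: "open ?S" "0 \<in> ?S" using open_line_preimage[OF assms(1)] assms(2) by auto
  have "((\<lambda>t. F (x + t *\<^sub>R axis m 1)) has_vector_derivative D) (at 0) \<longleftrightarrow>
        ((\<lambda>t. G (x + t *\<^sub>R axis m 1)) has_vector_derivative D) (at 0)" for D
    by (rule iffI; erule has_vector_derivative_transform_within_open[OF _ S]) (simp_all add: assms(3))
  then show ?thesis unfolding pd_def vector_derivative_def by simp
qed

lemma coordinate_differentiable_on_cong: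
  assumes "open U" "coordinate_differentiable_on U G" "\<And>y. y \<in> U \<Longrightarrow> F y = G y"
  shows "coordinate_differentiable_on U F"
  unfolding coordinate_differentiable_on_def
proof (intro ballI allI)
  fix x m assume "x \<in> U"
  let ?S = "{t::real. x + t *\<^sub>R axis m 1 \<in> U}"
  have S: "open ?S" "0 \<in> ?S" using open_line_preimage[OF assms(1)] \<open>x \<in> U\<close> by auto
  have "((\<lambda>t. F (x + t *\<^sub>R axis m 1)) has_vector_derivative pd m G x) (at 0)"
    by (rule has_vector_derivative_transform_within_open[OF has_vector_derivative_pd[OF assms(2) \<open>x \<in> U\<close>] S])
       (simp add: assms(3))
  then show "(\<lambda>t. F (x + t *\<^sub>R axis m 1)) differentiable (at 0)"
    by (rule differentiableI_vector)
qed

lemma coordinate_differentiable_on_inner: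
  fixes F G :: "real^3 \<Rightarrow> real^3"
  assumes "coordinate_differentiable_on U F" "coordinate_differentiable_on U G"
  shows "coordinate_differentiable_on U (\<lambda>y. F y \<bullet> G y)"
  unfolding coordinate_differentiable_on_def
proof (intro ballI allI)
  fix x m assume "x \<in> U"
  show "(\<lambda>t. F (x + t *\<^sub>R axis m 1) \<bullet> G (x + t *\<^sub>R axis m 1)) differentiable (at 0)"
    using bounded_bilinear.has_vector_derivative[OF bounded_bilinear_inner
        has_vector_derivative_pd[OF assms(1) \<open>x \<in> U\<close>] has_vector_derivative_pd[OF assms(2) \<open>x \<in> U\<close>]]
    by (rule differentiableI_vector)
qed

lemma coordinate_differentiable_on_divide:
  fixes a b :: "real^3 \<Rightarrow> real"
  assumes "coordinate_differentiable_on U a" "coordinate_differentiable_on U b"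
    "\<And>z. z \<in> U \<Longrightarrow> b z \<noteq> 0"
  shows "coordinate_differentiable_on U (\<lambda>y. a y / b y)"
  using assms unfolding coordinate_differentiable_on_def by (auto intro!: differentiable_divide)

lemma pd_inner:
  fixes F G :: "real^3 \<Rightarrow> real^3"
  assumes "coordinate_differentiable_on U F" "coordinate_differentiable_on U G" "z \<in> U"
  shows "pd m (\<lambda>y. F y \<bullet> G y) z = pd m F z \<bullet> G z + F z \<bullet> pd m G z"
proof -
  have "((\<lambda>t. F (z + t *\<^sub>R axis m 1) \<bullet> G (z + t *\<^sub>R axis m 1)) has_vector_derivative
          (F z \<bullet> pd m G z + pd m F z \<bullet> G z)) (at 0)"
    using bounded_bilinear.has_vector_derivative[OF bounded_bilinear_inner
        has_vector_derivative_pd[OF assms(1,3)] has_vector_derivative_pd[OF assms(2,3)]] by simp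
  then show ?thesis unfolding pd_def by (subst vector_derivative_at) (auto simp: algebra_simps)
qed

lemma pd_scaleR:
  fixes a :: "real^3 \<Rightarrow> real" and F :: "real^3 \<Rightarrow> real^3"
  assumes "coordinate_differentiable_on U a" "coordinate_differentiable_on U F" "z \<in> U"
  shows "pd m (\<lambda>y. a y *\<^sub>R F y) z = a z *\<^sub>R pd m F z + pd m a z *\<^sub>R F z"
proof -
  have "((\<lambda>t. a (z + t *\<^sub>R axis m 1) *\<^sub>R F (z + t *\<^sub>R axis m 1)) has_vector_derivative
          (a z *\<^sub>R pd m F z + pd m a z *\<^sub>R F z)) (at 0)"
    using has_vector_derivative_scaleR[OF has_vector_derivative_pd[OF assms(1,3),
          unfolded has_real_derivative_iff_has_vector_derivative[symmetric]]
        has_vector_derivative_pd[OF assms(2,3)]] by simp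
  then show ?thesis unfolding pd_def by (rule vector_derivative_at)
qed

section \<open>Symmetry of second partial derivatives\<close>

lemma mean_value_along_line:
  fixes F D :: "'a::real_normed_vector \<Rightarrow> real"
  assumes "0 < t"
    and "\<And>s. 0 \<le> s \<Longrightarrow> s \<le> t \<Longrightarrow>
           ((\<lambda>r. F (z + r *\<^sub>R v)) has_vector_derivative D (z + s *\<^sub>R v)) (at s)"
  obtains \<sigma> where "0 < \<sigma>" "\<sigma> < t" "F (z + t *\<^sub>R v) - F z = t * D (z + \<sigma> *\<^sub>R v)"
proof -
  have "\<exists>\<sigma>. 0 < \<sigma> \<and> \<sigma> < t \<and>
      (\<lambda>r. F (z + r *\<^sub>R v)) t - (\<lambda>r. F (z + r *\<^sub>R v)) 0 = (t - 0) * D (z + \<sigma> *\<^sub>R v)"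
    by (rule MVT2) (use assms in \<open>auto simp: has_real_derivative_iff_has_vector_derivative\<close>)
  then show ?thesis using that by auto
qed

lemma dist_add_axes_le:
  fixes x :: "real^'n" and a b :: 'n
  assumes "0 \<le> s" "s \<le> t" "0 \<le> r" "r \<le> t"
  shows "dist (x + s *\<^sub>R axis a 1 + r *\<^sub>R axis b 1) x \<le> 2 * t"
proof -
  have "norm (s *\<^sub>R axis a (1::real) + r *\<^sub>R axis b 1) \<le>
      norm (s *\<^sub>R axis a (1::real)) + norm (r *\<^sub>R axis b (1::real))"
    by (rule norm_triangle_ineq)
  also have "\<dots> \<le> 2 * t" using assms by simp
  finally show ?thesis by (simp add: dist_norm add.assoc)
qed

lemma second_difference_mean_value:
  fixes F Da Dba :: "real^'n \<Rightarrow> real"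
  assumes "0 < t" and sub: "cball x (2*t) \<subseteq> U"
    and dA: "\<And>z. z\<in>U \<Longrightarrow> ((\<lambda>s. F (z + s *\<^sub>R axis a 1)) has_vector_derivative Da z) (at 0)"
    and dBA: "\<And>z. z\<in>U \<Longrightarrow> ((\<lambda>s. Da (z + s *\<^sub>R axis b 1)) has_vector_derivative Dba z) (at 0)"
  obtains \<xi> where "dist \<xi> x \<le> 2*t"
    "F (x + t *\<^sub>R axis a 1 + t *\<^sub>R axis b 1) - F (x + t *\<^sub>R axis a 1) - F (x + t *\<^sub>R axis b 1) + F x
       = t * t * Dba \<xi>"
proof -
  let ?ea = "axis a (1::real)" and ?eb = "axis b (1::real)"
  have inU: "x + s *\<^sub>R ?ea + r *\<^sub>R ?eb \<in> U" if "0 \<le> s" "s \<le> t" "0 \<le> r" "r \<le> t" for s r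
    using dist_add_axes_le[OF that, where x = x and a = a and b = b] sub by (auto simp: dist_commute)
  obtain \<sigma> where \<sigma>: "0 < \<sigma>" "\<sigma> < t" and eq1:
    "(F (x + t *\<^sub>R ?ea + t *\<^sub>R ?eb) - F (x + t *\<^sub>R ?ea)) -
     (F (x + 0 *\<^sub>R ?ea + t *\<^sub>R ?eb) - F (x + 0 *\<^sub>R ?ea))
      = t * (Da (x + \<sigma> *\<^sub>R ?ea + t *\<^sub>R ?eb) - Da (x + \<sigma> *\<^sub>R ?ea))"
  proof (rule mean_value_along_line[where F = "\<lambda>w. F (w + t *\<^sub>R ?eb) - F w"
        and D = "\<lambda>w. Da (w + t *\<^sub>R ?eb) - Da w", OF \<open>0 < t\<close>])
    fix s assume s: "0 \<le> s" "s \<le> t"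
    have "((\<lambda>r. F (x + t *\<^sub>R ?eb + r *\<^sub>R ?ea)) has_vector_derivative
        Da (x + s *\<^sub>R ?ea + t *\<^sub>R ?eb)) (at s)"
      by (rule has_vector_derivative_line_shift[OF dA[OF inU[OF s]]])
         (use \<open>0 < t\<close> in \<open>simp_all add: algebra_simps\<close>)
    moreover have "((\<lambda>r. F (x + r *\<^sub>R ?ea)) has_vector_derivative Da (x + s *\<^sub>R ?ea)) (at s)"
      using has_vector_derivative_line_shift[OF dA[OF inU[of s 0]], of x s] s by simp
    ultimately show "((\<lambda>r. F (x + r *\<^sub>R ?ea + t *\<^sub>R ?eb) - F (x + r *\<^sub>R ?ea)) has_vector_derivative
        Da (x + s *\<^sub>R ?ea + t *\<^sub>R ?eb) - Da (x + s *\<^sub>R ?ea)) (at s)"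
      by (intro has_vector_derivative_diff) (simp_all add: add_ac)
  qed (auto simp: that)
  obtain \<tau> where \<tau>: "0 < \<tau>" "\<tau> < t" and eq2:
    "Da (x + \<sigma> *\<^sub>R ?ea + t *\<^sub>R ?eb) - Da (x + \<sigma> *\<^sub>R ?ea) = t * Dba (x + \<sigma> *\<^sub>R ?ea + \<tau> *\<^sub>R ?eb)"
  proof (rule mean_value_along_line[where F = Da, OF \<open>0 < t\<close>])
    fix r assume "0 \<le> r" "r \<le> t"
    then show "((\<lambda>r. Da (x + \<sigma> *\<^sub>R ?ea + r *\<^sub>R ?eb)) has_vector_derivative
        Dba (x + \<sigma> *\<^sub>R ?ea + r *\<^sub>R ?eb)) (at r)"
      by (intro has_vector_derivative_line_shift[OF dBA[OF inU]]) (use \<sigma> in auto)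
  qed (auto simp: that)
  show ?thesis
    by (rule that[OF dist_add_axes_le[of \<sigma> t \<tau>]]) (use \<sigma> \<tau> eq1 eq2 in \<open>auto simp: algebra_simps\<close>)
qed

lemma mixed_partials_eq:
  fixes F Da Db Dab Dba :: "real^'n \<Rightarrow> real"
  assumes "open U" "x \<in> U"
    and dA: "\<And>z. z\<in>U \<Longrightarrow> ((\<lambda>s. F (z + s *\<^sub>R axis a 1)) has_vector_derivative Da z) (at 0)"
    and dB: "\<And>z. z\<in>U \<Longrightarrow> ((\<lambda>s. F (z + s *\<^sub>R axis b 1)) has_vector_derivative Db z) (at 0)"
    and dBA: "\<And>z. z\<in>U \<Longrightarrow> ((\<lambda>s. Da (z + s *\<^sub>R axis b 1)) has_vector_derivative Dba z) (at 0)"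
    and dAB: "\<And>z. z\<in>U \<Longrightarrow> ((\<lambda>s. Db (z + s *\<^sub>R axis a 1)) has_vector_derivative Dab z) (at 0)"
    and c1: "continuous (at x) Dba" and c2: "continuous (at x) Dab"
  shows "Dba x = Dab x"
proof (rule ccontr)
  assume ne: "Dba x \<noteq> Dab x"
  define \<eta> where "\<eta> = \<bar>Dba x - Dab x\<bar> / 2"
  have \<eta>: "\<eta> > 0" using ne by (simp add: \<eta>_def)
  obtain d1 where d1: "d1 > 0" "\<And>y. dist y x < d1 \<Longrightarrow> dist (Dba y) (Dba x) < \<eta>"
    using c1 \<eta> unfolding continuous_at_eps_delta by blast
  obtain d2 where d2: "d2 > 0" "\<And>y. dist y x < d2 \<Longrightarrow> dist (Dab y) (Dab x) < \<eta>"
    using c2 \<eta> unfolding continuous_at_eps_delta by blast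
  obtain d0 where d0: "d0 > 0" "ball x d0 \<subseteq> U"
    using assms(1,2) open_contains_ball by blast
  define t where "t = min d0 (min d1 d2) / 4"
  have t: "t > 0" "2*t < d0" "2*t < d1" "2*t < d2" using d0 d1 d2 by (auto simp: t_def)
  have "cball x (2*t) \<subseteq> ball x d0" using t(2) by (simp add: cball_subset_ball_iff)
  then have sub: "cball x (2*t) \<subseteq> U" using d0(2) by blast
  obtain \<xi>1 where x1: "dist \<xi>1 x \<le> 2*t" and e1:
     "F (x + t *\<^sub>R axis a 1 + t *\<^sub>R axis b 1) - F (x + t *\<^sub>R axis a 1) - F (x + t *\<^sub>R axis b 1) + F x
       = t * t * Dba \<xi>1"
    using second_difference_mean_value[OF t(1) sub dA dBA] by blast
  obtain \<xi>2 where x2: "dist \<xi>2 x \<le> 2*t" and e2: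
     "F (x + t *\<^sub>R axis b 1 + t *\<^sub>R axis a 1) - F (x + t *\<^sub>R axis b 1) - F (x + t *\<^sub>R axis a 1) + F x
       = t * t * Dab \<xi>2"
    using second_difference_mean_value[OF t(1) sub dB dAB] by blast
  have "t * t * Dba \<xi>1 = t * t * Dab \<xi>2" using e1 e2 by (simp add: algebra_simps)
  then have eq: "Dba \<xi>1 = Dab \<xi>2" using t by simp
  have "dist (Dba \<xi>1) (Dba x) < \<eta>" using d1 x1 t by auto
  moreover have "dist (Dab \<xi>2) (Dab x) < \<eta>" using d2 x2 t by auto
  ultimately have "\<bar>Dba x - Dab x\<bar> < 2 * \<eta>" using eq by (simp add: dist_real_def)
  then show False by (simp add: \<eta>_def)
qed

lemma pd_commute:
  fixes g :: "real^3 \<Rightarrow> real^3"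
  assumes "open U" "x \<in> U" "smooth_on U g"
  shows "pd b (pd a g) x = pd a (pd b g) x"
proof -
  note L = smooth_onD[OF assms(3)]
  have component: "((\<lambda>s. G (z + s *\<^sub>R axis m 1) $ n) has_vector_derivative pd m G z $ n) (at 0)"
    if "coordinate_differentiable_on U G" "z \<in> U" for G :: "real^3 \<Rightarrow> real^3" and z m n
    by (rule bounded_linear.has_vector_derivative[OF bounded_linear_vec_nth
          has_vector_derivative_pd[OF that]])
  have continuous: "continuous (at x) (\<lambda>z. pd m (pd m' g) z $ n)" for m m' n
    using L(4)[of m m'] assms(1,2)
    by (intro continuous_intros) (simp add: continuous_on_eq_continuous_at)
  have "pd b (pd a g) x $ n = pd a (pd b g) x $ n" for n
    by (rule mixed_partials_eq[OF assms(1,2), where F="\<lambda>z. g z $ n"])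
       (use component[OF L(1)] component[OF L(2)] continuous in blast)+
  then show ?thesis by (simp add: vec_eq_iff)
qed

section \<open>The frame of a triply orthogonal system\<close>

lemma triply_orthogonalD:
  assumes "triply_orthogonal U g"
  shows "smooth_on U g"
    and "y \<in> U \<Longrightarrow> det (\<chi> m. pd m g y) \<noteq> 0"
    and "y \<in> U \<Longrightarrow> a \<noteq> b \<Longrightarrow> pd a g y \<bullet> pd b g y = 0"
  using assms by (auto simp: triply_orthogonal_def)

lemma triply_orthogonal_pd_nonzero:
  assumes "triply_orthogonal U g" "y \<in> U"
  shows "pd m g y \<noteq> 0"
proof
  assume "pd m g y = 0"
  then have "row m (\<chi> m. pd m g y) = 0" by (simp add: row_def vec_eq_iff)
  then show False using triply_orthogonalD(2)[OF assms] det_zero_row(1) by blast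
qed

lemma orthogonal_rows_eq_0:
  fixes G :: "'n \<Rightarrow> real^'n"
  assumes "det (\<chi> m. G m) \<noteq> 0" and "\<And>m. z \<bullet> G m = 0"
  shows "z = 0"
proof -
  let ?A = "(\<chi> m. G m) :: real^'n^'n"
  obtain B where B: "B ** ?A = mat 1"
    using assms(1) invertible_det_nz invertible_left_inverse by blast
  have "?A *v z = 0"
    using assms(2) by (simp add: vec_eq_iff matrix_vector_mul_component inner_commute)
  then have "B *v (?A *v z) = 0" by simp
  then show ?thesis by (simp add: matrix_vector_mul_assoc B)
qed

lemma orthogonal_others_imp_parallel_pd:
  assumes "triply_orthogonal U g" "y \<in> U"
    and "v \<bullet> pd (i+1) g y = 0" "v \<bullet> pd (i+2) g y = 0"
  shows "v = ((v \<bullet> pd i g y) / (pd i g y \<bullet> pd i g y)) *\<^sub>R pd i g y"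
proof -
  let ?G = "pd i g y"
  define c where "c = (v \<bullet> ?G) / (?G \<bullet> ?G)"
  have "?G \<bullet> ?G \<noteq> 0" using triply_orthogonal_pd_nonzero[OF assms(1,2)] by simp
  then have "(v - c *\<^sub>R ?G) \<bullet> pd m g y = 0" for m
    using exhaust_3_cyclic[of m i] assms(3,4) triply_orthogonalD(3)[OF assms(1,2)]
      cyclic_indices_distinct
    by (auto simp: c_def inner_diff_left)
  then have "v - c *\<^sub>R ?G = 0"
    by (rule orthogonal_rows_eq_0[OF triply_orthogonalD(2)[OF assms(1,2)]])
  then show ?thesis by (simp add: c_def)
qed

lemma unormal_orthogonal:
  "unormal g i y \<bullet> pd (i+1) g y = 0" "unormal g i y \<bullet> pd (i+2) g y = 0"
  by (simp_all add: unormal_def Let_def dot_cross_self)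

lemma unormal_inner_self:
  assumes "triply_orthogonal U g" "y \<in> U"
  shows "unormal g i y \<bullet> unormal g i y = 1"
proof -
  let ?a = "pd (i+1) g y" and ?b = "pd (i+2) g y"
  have "?a \<bullet> ?b = 0"
    using triply_orthogonalD(3)[OF assms] cyclic_indices_distinct by blast
  then have "(norm (cross3 ?a ?b))\<^sup>2 = (norm ?a * norm ?b)\<^sup>2"
    using norm_cross_dot[of ?a ?b] by simp
  moreover have "norm ?a * norm ?b \<noteq> 0"
    using triply_orthogonal_pd_nonzero[OF assms] by simp
  ultimately have "norm (cross3 ?a ?b) \<noteq> 0" by auto
  then show ?thesis
    by (simp add: unormal_def Let_def power2_norm_eq_inner[symmetric])
qed

lemma pd_eq_lame_scaleR_unormal:
  assumes "triply_orthogonal U g" "y \<in> U"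
  shows "pd i g y = lame g i y *\<^sub>R unormal g i y"
proof -
  let ?G = "pd i g y"
  define c where "c = (unormal g i y \<bullet> ?G) / (?G \<bullet> ?G)"
  have N: "unormal g i y = c *\<^sub>R ?G"
    unfolding c_def by (rule orthogonal_others_imp_parallel_pd[OF assms unormal_orthogonal])
  have "c * c * (?G \<bullet> ?G) = 1"
    using unormal_inner_self[OF assms, of i] by (simp add: N)
  then show ?thesis by (simp add: lame_def N algebra_simps)
qed

lemma norm_pd_eq_abs_lame:
  assumes "triply_orthogonal U g" "y \<in> U"
  shows "norm (pd i g y) = \<bar>lame g i y\<bar>"
proof -
  have "norm (unormal g i y) = 1"
    using unormal_inner_self[OF assms, of i] by (simp add: norm_eq_sqrt_inner)
  then show ?thesis by (subst pd_eq_lame_scaleR_unormal[OF assms]) simp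
qed

lemma lame_nonzero:
  assumes "triply_orthogonal U g" "y \<in> U"
  shows "lame g i y \<noteq> 0"
  using norm_pd_eq_abs_lame[OF assms, of i] triply_orthogonal_pd_nonzero[OF assms] by auto

lemma continuous_on_lame:
  assumes "triply_orthogonal U g"
  shows "continuous_on U (lame g i)"
proof -
  note L = smooth_onD[OF triply_orthogonalD(1)[OF assms]]
  define c where "c z = cross3 (pd (i+1) g z) (pd (i+2) g z)" for z
  have "norm (c z) \<noteq> 0" if "z \<in> U" for z
    using unormal_inner_self[OF assms that, of i] by (auto simp: unormal_def c_def)
  moreover have "continuous_on U c" unfolding c_def by (intro continuous_on_cross L(3))
  ultimately show ?thesis
    unfolding lame_def unormal_def Let_def c_def[symmetric]
    by (intro continuous_intros L(3)) auto
qed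

section \<open>Parallel coordinate surfaces\<close>

definition metric_coeff :: "(real^3 \<Rightarrow> real^3) \<Rightarrow> 3 \<Rightarrow> real^3 \<Rightarrow> real" where
  "metric_coeff g i y = pd i g y \<bullet> pd i g y"

lemma coordinate_differentiable_on_metric_coeff:
  assumes "smooth_on U g"
  shows "coordinate_differentiable_on U (metric_coeff g i)"
  unfolding metric_coeff_def[abs_def]
  by (intro coordinate_differentiable_on_inner smooth_onD(2)[OF assms])

lemma pd_metric_coeff:
  assumes "smooth_on U g" "z \<in> U"
  shows "pd j (metric_coeff g i) z = 2 * (pd j (pd i g) z \<bullet> pd i g z)"
  using pd_inner[OF smooth_onD(2)[OF assms(1)] smooth_onD(2)[OF assms(1)] assms(2), of j i i]
  by (simp add: metric_coeff_def[abs_def] inner_commute)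

lemma parallel_family_pd_on_slice:
  assumes g: "triply_orthogonal U g" and "0 < e" "ball x e \<subseteq> U"
    and par: "\<And>y s. y \<in> ball x e \<Longrightarrow> y + s *\<^sub>R axis i 1 \<in> ball x e \<Longrightarrow>
       g (y + s *\<^sub>R axis i 1) = g y + d (y $ i) (y $ i + s) *\<^sub>R unormal g i y"
    and y: "y \<in> ball x e" "y $ i = x $ i"
  shows "pd i g y = lame g i x *\<^sub>R unormal g i y"
proof -
  note L = smooth_onD(1)[OF triply_orthogonalD(1)[OF g]]
  have xB: "x \<in> ball x e" using \<open>0 < e\<close> by simp
  have xU: "x \<in> U" and yU: "y \<in> U" using xB y(1) assms(3) by auto
  define T where "T = {s. x + s *\<^sub>R axis i 1 \<in> ball x e} \<inter> {s. y + s *\<^sub>R axis i 1 \<in> ball x e}"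
  have T: "open T" "0 \<in> T" unfolding T_def
    by (intro open_Int open_line_preimage open_ball) (use xB y(1) in auto)
  define \<delta> where "\<delta> s = d (x $ i) (x $ i + s)" for s
  have "((\<lambda>s. (g (x + s *\<^sub>R axis i 1) - g x) \<bullet> unormal g i x) has_vector_derivative
          (pd i g x - 0) \<bullet> unormal g i x) (at 0)"
    by (intro bounded_linear.has_vector_derivative[OF bounded_linear_inner_left]
        has_vector_derivative_diff has_vector_derivative_pd[OF L xU] has_vector_derivative_const)
  then have "((\<lambda>s. (g (x + s *\<^sub>R axis i 1) - g x) \<bullet> unormal g i x) has_vector_derivative
               lame g i x) (at 0)"
    by (simp add: lame_def)
  then have "(\<delta> has_vector_derivative lame g i x) (at 0)"
    by (rule has_vector_derivative_transform_within_open[OF _ T])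
       (use par[OF xB] unormal_inner_self[OF g xU, of i] in \<open>auto simp: T_def \<delta>_def lame_def\<close>)
  then have "((\<lambda>s. g y + \<delta> s *\<^sub>R unormal g i y) has_vector_derivative
               lame g i x *\<^sub>R unormal g i y) (at 0)"
    by (auto intro!: derivative_eq_intros simp: has_real_derivative_iff_has_vector_derivative)
  then have "((\<lambda>s. g (y + s *\<^sub>R axis i 1)) has_vector_derivative lame g i x *\<^sub>R unormal g i y) (at 0)"
    by (rule has_vector_derivative_transform_within_open[OF _ T])
       (use par[OF y(1)] y(2) in \<open>auto simp: T_def \<delta>_def\<close>)
  then show ?thesis
    using has_vector_derivative_pd[OF L yU] vector_derivative_unique_at by blast
qed

lemma parallel_family_imp_pd_metric_coeff_eq_0:
  assumes g: "triply_orthogonal U g" and "parallel_family U g i" "x \<in> U" "n \<noteq> i"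
  shows "pd n (metric_coeff g i) x = 0"
proof -
  obtain e d where e: "e > 0" "ball x e \<subseteq> U" and
    par: "\<And>y s. y \<in> ball x e \<Longrightarrow> y + s *\<^sub>R axis i 1 \<in> ball x e \<Longrightarrow>
          g (y + s *\<^sub>R axis i 1) = g y + d (y $ i) (y $ i + s) *\<^sub>R unormal g i y"
    using assms(2,3) unfolding parallel_family_def by metis
  have slice: "metric_coeff g i y = metric_coeff g i x" if "y \<in> ball x e" "y $ i = x $ i" for y
  proof -
    have "y \<in> U" using that(1) e(2) by blast
    then show ?thesis
      using parallel_family_pd_on_slice[OF g e par that] pd_eq_lame_scaleR_unormal[OF g assms(3)]
        unormal_inner_self[OF g] assms(3)
      by (simp add: metric_coeff_def)
  qed
  let ?S = "{r. x + r *\<^sub>R axis n 1 \<in> ball x e}"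
  have S: "open ?S" "0 \<in> ?S" using e(1) open_line_preimage[OF open_ball] by auto
  have "((\<lambda>r. metric_coeff g i (x + r *\<^sub>R axis n 1)) has_vector_derivative 0) (at 0)"
    by (rule has_vector_derivative_transform_within_open[OF has_vector_derivative_const S])
       (use slice assms(4) in \<open>auto simp: axis_def\<close>)
  then show ?thesis unfolding pd_def by (rule vector_derivative_at)
qed

lemma pd_metric_coeff_eq_0_imp_second_pd_orthogonal:
  assumes "open U" "triply_orthogonal U g" "z \<in> U" "j \<noteq> i"
    and "pd j (metric_coeff g i) z = 0"
  shows "pd i (pd i g) z \<bullet> pd j g z = 0"
proof -
  have sm: "smooth_on U g" using triply_orthogonalD(1)[OF assms(2)] .
  note L = smooth_onD(2)[OF sm]
  have "pd i (\<lambda>y. pd i g y \<bullet> pd j g y) z = pd i (\<lambda>y. 0) z"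
    by (rule pd_cong[OF assms(1,3)]) (use triply_orthogonalD(3)[OF assms(2)] assms(4) in auto)
  also have "\<dots> = 0" unfolding pd_def by simp
  finally have "pd i (pd i g) z \<bullet> pd j g z + pd i g z \<bullet> pd i (pd j g) z = 0"
    using pd_inner[OF L L assms(3), of i i j] by simp
  moreover have "pd i (pd j g) z = pd j (pd i g) z" by (rule pd_commute[OF assms(1,3) sm])
  moreover have "pd i g z \<bullet> pd j (pd i g) z = 0"
    using assms(5) pd_metric_coeff[OF sm assms(3)] by (simp add: inner_commute)
  ultimately show ?thesis by simp
qed

lemma pd_metric_coeff_eq_0_imp_second_pd_parallel:
  assumes "open U" "triply_orthogonal U g" "z \<in> U"
    and "pd (i+1) (metric_coeff g i) z = 0" "pd (i+2) (metric_coeff g i) z = 0"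
  obtains l where "pd i (pd i g) z = l *\<^sub>R pd i g z"
  using orthogonal_others_imp_parallel_pd[OF assms(2,3)]
    pd_metric_coeff_eq_0_imp_second_pd_orthogonal[OF assms(1-3) _ assms(4)]
    pd_metric_coeff_eq_0_imp_second_pd_orthogonal[OF assms(1-3) _ assms(5)]
    cyclic_indices_distinct
  by metis

lemma sgn_has_vector_derivative_0:
  fixes w :: "real \<Rightarrow> 'a::real_inner"
  assumes w: "(w has_vector_derivative l *\<^sub>R w t) (at t)" and "w t \<noteq> 0"
  shows "((\<lambda>s. sgn (w s)) has_vector_derivative 0) (at t)"
proof -
  have "((\<lambda>s. norm (w s)) has_derivative (\<lambda>h. (h *\<^sub>R (l *\<^sub>R w t)) \<bullet> sgn (w t))) (at t)"
    using has_derivative_compose[OF w[unfolded has_vector_derivative_def]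
        has_derivative_norm[OF assms(2)]] .
  moreover have "(\<lambda>h. (h *\<^sub>R (l *\<^sub>R w t)) \<bullet> sgn (w t)) = (*) (l * norm (w t))"
    using assms(2) by (auto simp: sgn_div_norm power2_norm_eq_inner[symmetric] power2_eq_square)
  ultimately have "((\<lambda>s. norm (w s)) has_real_derivative l * norm (w t)) (at t)"
    by (metis has_field_derivative_def)
  from DERIV_inverse_fun[OF this] assms(2)
  have "((\<lambda>s. inverse (norm (w s))) has_real_derivative - (l * inverse (norm (w t)))) (at t)"
    by (simp add: power2_eq_square field_simps)
  from has_vector_derivative_scaleR[OF this w]
  show ?thesis by (simp add: sgn_div_norm divide_inverse_commute mult.commute)
qed

lemma pd_metric_coeff_eq_0_imp_pd_along_line:
  assumes "open U" "triply_orthogonal U g"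
    and H: "\<forall>z\<in>U. pd (i+1) (metric_coeff g i) z = 0 \<and> pd (i+2) (metric_coeff g i) z = 0"
    and I: "convex I" "\<And>t. t \<in> I \<Longrightarrow> y + t *\<^sub>R axis i 1 \<in> U" "0 \<in> I" "\<tau> \<in> I"
  shows "pd i g (y + \<tau> *\<^sub>R axis i 1) =
    (norm (pd i g (y + \<tau> *\<^sub>R axis i 1)) / norm (pd i g y)) *\<^sub>R pd i g y"
proof -
  define w where "w t = pd i g (y + t *\<^sub>R axis i 1)" for t
  have "((\<lambda>t. sgn (w t)) has_vector_derivative 0) (at t)" if "t \<in> I" for t
  proof -
    have zU: "y + t *\<^sub>R axis i 1 \<in> U" using I(2) that .
    obtain l where "pd i (pd i g) (y + t *\<^sub>R axis i 1) = l *\<^sub>R w t"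
      using pd_metric_coeff_eq_0_imp_second_pd_parallel[OF assms(1,2) zU] H zU
      unfolding w_def by blast
    moreover have "(w has_vector_derivative pd i (pd i g) (y + t *\<^sub>R axis i 1)) (at t)"
      unfolding w_def
      by (rule has_vector_derivative_pd_line[OF smooth_onD(2)[OF triply_orthogonalD(1)[OF assms(2)]] zU])
    ultimately show ?thesis
      using sgn_has_vector_derivative_0 triply_orthogonal_pd_nonzero[OF assms(2) zU]
      unfolding w_def by metis
  qed
  then have "sgn (w \<tau>) = sgn (w 0)" by (rule has_vector_derivative_0_imp_eq[OF I(1) _ I(4,3)])
  have "w \<tau> = norm (w \<tau>) *\<^sub>R sgn (w \<tau>)"
    by (cases "w \<tau> = 0") (simp_all add: sgn_div_norm)
  also have "\<dots> = norm (w \<tau>) *\<^sub>R sgn (w 0)" using \<open>sgn (w \<tau>) = sgn (w 0)\<close> by simp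
  also have "\<dots> = (norm (w \<tau>) / norm (w 0)) *\<^sub>R w 0"
    by (simp add: sgn_div_norm divide_inverse_commute)
  finally show ?thesis by (simp add: w_def)
qed

lemma connected_nonzero_imp_sign_eq:
  fixes \<phi> :: "'a::topological_space \<Rightarrow> real"
  assumes "connected S" "continuous_on S \<phi>" "\<And>z. z \<in> S \<Longrightarrow> \<phi> z \<noteq> 0" "a \<in> S" "b \<in> S"
  shows "\<phi> a > 0 \<longleftrightarrow> \<phi> b > 0"
proof -
  have "connected (\<phi> ` S)" by (rule connected_continuous_image[OF assms(2,1)])
  then have "0 \<in> \<phi> ` S" if "p \<in> \<phi> ` S" "q \<in> \<phi> ` S" "p \<le> 0" "0 \<le> q" for p q
    using that unfolding connected_iff_interval by blast
  moreover have "0 \<notin> \<phi> ` S" using assms(3) by force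
  ultimately show ?thesis
    using assms(3-5) by (metis image_eqI linorder_not_le order_less_imp_le)
qed

lemma lame_sign_const:
  assumes "triply_orthogonal U g" "connected C" "C \<subseteq> U" "x \<in> C"
  obtains \<epsilon> where "\<And>z. z \<in> C \<Longrightarrow> lame g i z = \<epsilon> * norm (pd i g z)"
proof -
  have "lame g i z = sgn (lame g i x) * norm (pd i g z)" if "z \<in> C" for z
  proof -
    have "lame g i z > 0 \<longleftrightarrow> lame g i x > 0"
      by (rule connected_nonzero_imp_sign_eq[OF assms(2)])
         (use continuous_on_subset[OF continuous_on_lame[OF assms(1)] assms(3)]
           lame_nonzero[OF assms(1)] assms(3,4) that in auto)
    then show ?thesis
      using norm_pd_eq_abs_lame[OF assms(1)] lame_nonzero[OF assms(1)] assms(3,4) that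
      by (auto simp: sgn_real_def)
  qed
  then show ?thesis by (rule that)
qed

lemma pd_eq_0_imp_eq_along_line:
  assumes "convex C" "coordinate_differentiable_on C F" "\<And>z. z \<in> C \<Longrightarrow> pd n F z = 0"
    and "y \<in> C" "y + s *\<^sub>R axis n 1 \<in> C"
  shows "F (y + s *\<^sub>R axis n 1) = F y"
proof -
  have "((\<lambda>t. F (y + t *\<^sub>R axis n 1)) has_vector_derivative 0) (at t)"
    if "t \<in> {t. y + t *\<^sub>R axis n 1 \<in> C}" for t
    using has_vector_derivative_pd_line[OF assms(2)] assms(3) that by fastforce
  then have "F (y + s *\<^sub>R axis n 1) = F (y + 0 *\<^sub>R axis n 1)"
    by (rule has_vector_derivative_0_imp_eq[OF convex_line_preimage[OF assms(1)]])
       (use assms(4,5) in auto)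
  then show ?thesis by simp
qed

lemma pd_eq_0_imp_eq_on_box_slice:
  fixes F :: "real^3 \<Rightarrow> 'a::real_normed_vector"
  assumes F: "coordinate_differentiable_on (box a b) F"
    and "\<And>z. z \<in> box a b \<Longrightarrow> pd (i+1) F z = 0" "\<And>z. z \<in> box a b \<Longrightarrow> pd (i+2) F z = 0"
    and z: "z \<in> box a b" "z' \<in> box a b" "z $ i = z' $ i"
  shows "F z = F z'"
proof -
  define w where "w = z + (z' $ (i+1) - z $ (i+1)) *\<^sub>R axis (i+1) 1"
  have wm: "w $ m = (if m = i+1 then z' $ m else z $ m)" for m by (simp add: w_def axis_def)
  have wC: "w \<in> box a b" using z(1,2) unfolding mem_box_cart by (simp add: wm)
  have z': "z' = w + (z' $ (i+2) - z $ (i+2)) *\<^sub>R axis (i+2) 1"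
    unfolding vec_eq_iff
  proof
    fix m
    show "z' $ m = (w + (z' $ (i+2) - z $ (i+2)) *\<^sub>R axis (i+2) 1) $ m"
      using exhaust_3_cyclic[of m i] cyclic_indices_distinct z(3) by (auto simp: wm axis_def)
  qed
  have "F w = F z"
    using pd_eq_0_imp_eq_along_line[OF convex_box(2) F assms(2) z(1) wC[unfolded w_def]]
    by (simp add: w_def)
  moreover have "F z' = F w"
    using pd_eq_0_imp_eq_along_line[OF convex_box(2) F assms(3) wC] z(2) z' by metis
  ultimately show ?thesis by simp
qed

lemma displacement_along_coordinate_line:
  fixes g N :: "real^3 \<Rightarrow> real^3" and \<rho> :: "real^3 \<Rightarrow> real"
  assumes g: "coordinate_differentiable_on (box a b) g"
    and pd: "\<And>y t. y \<in> box a b \<Longrightarrow> y + t *\<^sub>R axis i 1 \<in> box a b \<Longrightarrow>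
               pd i g (y + t *\<^sub>R axis i 1) = \<rho> (y + t *\<^sub>R axis i 1) *\<^sub>R N y"
    and \<rho>: "\<And>z z'. z \<in> box a b \<Longrightarrow> z' \<in> box a b \<Longrightarrow> z $ i = z' $ i \<Longrightarrow> \<rho> z = \<rho> z'"
    and y: "y \<in> box a b" "y + s *\<^sub>R axis i 1 \<in> box a b"
    and q: "q \<in> box a b" "q $ i = y $ i" "N q \<bullet> N q = 1"
  shows "g (y + s *\<^sub>R axis i 1) = g y + ((g (q + s *\<^sub>R axis i 1) - g q) \<bullet> N q) *\<^sub>R N y"
proof -
  have q_line: "q + t *\<^sub>R axis i 1 \<in> box a b" if "y + t *\<^sub>R axis i 1 \<in> box a b" for t
  proof -
    have "(q + t *\<^sub>R axis i 1) $ m = (if m = i then (y + t *\<^sub>R axis i 1) $ m else q $ m)" for m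
      using q(2) by (simp add: axis_def)
    then show ?thesis using that q(1) unfolding mem_box_cart by (metis (no_types, lifting))
  qed
  define \<Phi> where
    "\<Phi> t = g (y + t *\<^sub>R axis i 1) - ((g (q + t *\<^sub>R axis i 1) - g q) \<bullet> N q) *\<^sub>R N y" for t
  have "(\<Phi> has_vector_derivative 0) (at t)" if "t \<in> {t. y + t *\<^sub>R axis i 1 \<in> box a b}" for t
  proof -
    have yt: "y + t *\<^sub>R axis i 1 \<in> box a b" and qt: "q + t *\<^sub>R axis i 1 \<in> box a b"
      using that q_line by auto
    have "(\<Phi> has_vector_derivative
            pd i g (y + t *\<^sub>R axis i 1) - ((pd i g (q + t *\<^sub>R axis i 1) - 0) \<bullet> N q) *\<^sub>R N y) (at t)"
      unfolding \<Phi>_def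
      by (intro has_vector_derivative_diff has_vector_derivative_const
          bounded_linear.has_vector_derivative[OF bounded_linear_scaleR_left]
          bounded_linear.has_vector_derivative[OF bounded_linear_inner_left]
          has_vector_derivative_pd_line[OF g] yt qt)
    moreover have "\<rho> (q + t *\<^sub>R axis i 1) = \<rho> (y + t *\<^sub>R axis i 1)"
      by (rule \<rho>[OF qt yt]) (simp add: q(2))
    ultimately show ?thesis using pd[OF y(1) yt] pd[OF q(1) qt] q(3) by simp
  qed
  then have "\<Phi> s = \<Phi> 0"
    by (rule has_vector_derivative_0_imp_eq[OF convex_line_preimage[OF convex_box(2)]])
       (use y in auto)
  then show ?thesis by (simp add: \<Phi>_def algebra_simps)
qed

lemma pd_metric_coeff_eq_0_imp_norm_pd_eq_on_box_slice:
  assumes g: "triply_orthogonal U g" and "box a b \<subseteq> U"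
    and H: "\<forall>z\<in>U. pd (i+1) (metric_coeff g i) z = 0 \<and> pd (i+2) (metric_coeff g i) z = 0"
    and z: "z \<in> box a b" "z' \<in> box a b" "z $ i = z' $ i"
  shows "norm (pd i g z) = norm (pd i g z')"
proof -
  have "metric_coeff g i z = metric_coeff g i z'"
    by (rule pd_eq_0_imp_eq_on_box_slice[OF coordinate_differentiable_on_subset[OF
          coordinate_differentiable_on_metric_coeff[OF triply_orthogonalD(1)[OF g]] assms(2)] _ _ z])
       (use H assms(2) in auto)
  then show ?thesis by (simp add: metric_coeff_def norm_eq_sqrt_inner)
qed

lemma pd_metric_coeff_eq_0_imp_pd_on_box:
  assumes "open U" and g: "triply_orthogonal U g"
    and H: "\<forall>z\<in>U. pd (i+1) (metric_coeff g i) z = 0 \<and> pd (i+2) (metric_coeff g i) z = 0"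
    and box: "box a b \<subseteq> U" and \<epsilon>: "\<And>z. z \<in> box a b \<Longrightarrow> lame g i z = \<epsilon> * norm (pd i g z)"
    and y: "y \<in> box a b" "y + t *\<^sub>R axis i 1 \<in> box a b"
  shows "pd i g (y + t *\<^sub>R axis i 1) = (\<epsilon> * norm (pd i g (y + t *\<^sub>R axis i 1))) *\<^sub>R unormal g i y"
proof -
  have yU: "y \<in> U" using y(1) box by blast
  define n where "n = norm (pd i g y)"
  have "n \<noteq> 0" using triply_orthogonal_pd_nonzero[OF g yU] by (simp add: n_def)
  have "pd i g (y + t *\<^sub>R axis i 1) = (norm (pd i g (y + t *\<^sub>R axis i 1)) / n) *\<^sub>R pd i g y"
    unfolding n_def
    by (rule pd_metric_coeff_eq_0_imp_pd_along_line[OF assms(1) g H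
          convex_line_preimage[OF convex_box(2)]])
       (use box y in auto)
  also have "pd i g y = (\<epsilon> * n) *\<^sub>R unormal g i y"
    unfolding n_def by (subst \<epsilon>[OF y(1), symmetric]) (rule pd_eq_lame_scaleR_unormal[OF g yU])
  also have "(norm (pd i g (y + t *\<^sub>R axis i 1)) / n) *\<^sub>R \<dots> =
      (\<epsilon> * norm (pd i g (y + t *\<^sub>R axis i 1))) *\<^sub>R unormal g i y"
    using \<open>n \<noteq> 0\<close> by simp
  finally show ?thesis .
qed

lemma box_move_coordinate:
  fixes x y :: "real^'n"
  assumes "x \<in> box a b" "y \<in> box a b"
  shows "x + (y $ i - x $ i) *\<^sub>R axis i 1 \<in> box a b"
  unfolding mem_box_cart
proof
  fix m
  have "(x + (y $ i - x $ i) *\<^sub>R axis i 1) $ m = (if m = i then y $ m else x $ m)"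
    by (simp add: axis_def)
  then show "a $ m < (x + (y $ i - x $ i) *\<^sub>R axis i 1) $ m \<and>
      (x + (y $ i - x $ i) *\<^sub>R axis i 1) $ m < b $ m"
    using assms unfolding mem_box_cart by (cases "m = i") auto
qed

lemma pd_metric_coeff_eq_0_imp_parallel_family:
  assumes "open U" and g: "triply_orthogonal U g"
    and H: "\<forall>z\<in>U. pd (i+1) (metric_coeff g i) z = 0 \<and> pd (i+2) (metric_coeff g i) z = 0"
  shows "parallel_family U g i"
  unfolding parallel_family_def
proof
  fix x assume "x \<in> U"
  obtain a b where box: "box a b \<subseteq> U" "x \<in> box a b"
    using open_contains_box[OF assms(1) \<open>x \<in> U\<close>] by metis
  obtain r where r: "r > 0" "ball x r \<subseteq> box a b"
    using open_box box(2) by (rule openE)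
  obtain \<epsilon> where \<epsilon>: "\<And>z. z \<in> box a b \<Longrightarrow> lame g i z = \<epsilon> * norm (pd i g z)"
    using lame_sign_const[where i = i, OF g convex_connected[OF convex_box(2)] box] by blast
  have \<rho>: "\<epsilon> * norm (pd i g z) = \<epsilon> * norm (pd i g z')"
    if "z \<in> box a b" "z' \<in> box a b" "z $ i = z' $ i" for z z'
    using pd_metric_coeff_eq_0_imp_norm_pd_eq_on_box_slice[OF g box(1) H that] by simp
  have pd_line: "pd i g (y + t *\<^sub>R axis i 1) =
      (\<epsilon> * norm (pd i g (y + t *\<^sub>R axis i 1))) *\<^sub>R unormal g i y"
    if "y \<in> box a b" "y + t *\<^sub>R axis i 1 \<in> box a b" for y t
    by (rule pd_metric_coeff_eq_0_imp_pd_on_box[OF assms(1) g H box(1) \<epsilon> that])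
  define p where "p c = x + (c - x $ i) *\<^sub>R axis i 1" for c
  \<comment> \<open>the distance between two members is read off on the x_i-line through x\<close>
  define d where "d c c' = (g (p c') - g (p c)) \<bullet> unormal g i (p c)" for c c'
  have "g (y + s *\<^sub>R axis i 1) = g y + d (y $ i) (y $ i + s) *\<^sub>R unormal g i y"
    if "y \<in> ball x r" "y + s *\<^sub>R axis i 1 \<in> ball x r" for y s
  proof -
    have y: "y \<in> box a b" "y + s *\<^sub>R axis i 1 \<in> box a b" using that r(2) by auto
    have p: "p (y $ i) \<in> box a b" "p (y $ i) $ i = y $ i"
      using box_move_coordinate[OF box(2) y(1)] by (simp_all add: p_def)
    then have "p (y $ i) \<in> U" using box(1) by blast
    have "g (y + s *\<^sub>R axis i 1) = g y + ((g (p (y $ i) + s *\<^sub>R axis i 1) - g (p (y $ i))) \<bullet>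
        unormal g i (p (y $ i))) *\<^sub>R unormal g i y"
      by (rule displacement_along_coordinate_line[where \<rho> = "\<lambda>z. \<epsilon> * norm (pd i g z)", OF
          coordinate_differentiable_on_subset[OF smooth_onD(1)[OF triply_orthogonalD(1)[OF g]] box(1)]
          pd_line \<rho> y p unormal_inner_self[OF g \<open>p (y $ i) \<in> U\<close>]])
    moreover have "p (y $ i) + s *\<^sub>R axis i 1 = p (y $ i + s)" by (simp add: p_def algebra_simps)
    ultimately show ?thesis by (simp only: d_def)
  qed
  then show "\<exists>e>0. ball x e \<subseteq> U \<and> (\<exists>d. \<forall>y\<in>ball x e. \<forall>s. y + s *\<^sub>R axis i 1 \<in> ball x e \<longrightarrow>
          g (y + s *\<^sub>R axis i 1) = g y + d (y $ i) (y $ i + s) *\<^sub>R unormal g i y)"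
    using r box(1) by blast
qed

lemma parallel_family_iff_pd_metric_coeff_eq_0:
  assumes "open U" "triply_orthogonal U g"
  shows "parallel_family U g i \<longleftrightarrow>
    (\<forall>z\<in>U. pd (i+1) (metric_coeff g i) z = 0 \<and> pd (i+2) (metric_coeff g i) z = 0)"
  using parallel_family_imp_pd_metric_coeff_eq_0[OF assms(2)]
    pd_metric_coeff_eq_0_imp_parallel_family[OF assms] cyclic_indices_distinct
  by blast

section \<open>Associated systems\<close>

lemma associated_system_pd:
  assumes "associated_system U f h fhat" "z \<in> U"
  shows "pd m fhat z = h m z *\<^sub>R pd m f z"
proof -
  have D: "(fhat has_derivative (\<lambda>v. \<Sum>n\<in>UNIV. (v $ n * h n z) *\<^sub>R pd n f z)) (at z)"
    using assms unfolding associated_system_def by blast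
  have line: "((\<lambda>t::real. z + t *\<^sub>R axis m 1) has_derivative (\<lambda>t. t *\<^sub>R axis m 1)) (at 0)"
    by (auto intro!: derivative_eq_intros)
  have "(fhat has_derivative (\<lambda>v. \<Sum>n\<in>UNIV. (v $ n * h n z) *\<^sub>R pd n f z))
      (at ((\<lambda>t::real. z + t *\<^sub>R axis m 1) 0))"
    using D by simp
  from has_derivative_compose[OF line this]
  have "((\<lambda>t. fhat (z + t *\<^sub>R axis m 1)) has_derivative
      (\<lambda>t. \<Sum>n\<in>UNIV. ((t *\<^sub>R axis m 1) $ n * h n z) *\<^sub>R pd n f z)) (at 0)"
    by (simp add: o_def)
  moreover have "(\<Sum>n\<in>UNIV. ((t *\<^sub>R axis m 1) $ n * h n z) *\<^sub>R pd n f z) =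
      t *\<^sub>R (h m z *\<^sub>R pd m f z)" for t :: real
  proof -
    have "((t *\<^sub>R axis m 1) $ n * h n z) *\<^sub>R pd n f z =
        (if n = m then t *\<^sub>R (h m z *\<^sub>R pd m f z) else 0)" for n
      by (simp add: axis_def)
    then show ?thesis by (simp only: sum.delta') simp
  qed
  ultimately have "((\<lambda>t. fhat (z + t *\<^sub>R axis m 1)) has_vector_derivative h m z *\<^sub>R pd m f z) (at 0)"
    by (simp add: has_vector_derivative_def)
  then show ?thesis unfolding pd_def by (rule vector_derivative_at)
qed

lemma associated_system_h_nonzero:
  assumes "triply_orthogonal U fhat" "associated_system U f h fhat" "z \<in> U"
  shows "h m z \<noteq> 0"
  using triply_orthogonal_pd_nonzero[OF assms(1,3)] associated_system_pd[OF assms(2,3)] by force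

lemma associated_system_h_distinct:
  assumes "triply_orthogonal U f" "associated_system U f h fhat" "z \<in> U" "a \<noteq> b"
  shows "h a z \<noteq> h b z"
proof -
  have H: "lame f m z \<noteq> 0" for m by (rule lame_nonzero[OF assms(1,3)])
  have h1: "h 1 z = h 3 z + lame f 2 z / (lame f 1 z * lame f 3 z)"
    and h2: "h 2 z = h 3 z - lame f 1 z / (lame f 2 z * lame f 3 z)"
    using assms(2,3) unfolding associated_system_def by blast+
  have "h 1 z \<noteq> h 2 z"
  proof
    assume "h 1 z = h 2 z"
    then have "lame f 2 z / (lame f 1 z * lame f 3 z) + lame f 1 z / (lame f 2 z * lame f 3 z) = 0"
      using h1 h2 by simp
    then have "(lame f 2 z)\<^sup>2 + (lame f 1 z)\<^sup>2 = 0"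
      using H[of 1] H[of 2] H[of 3] by (simp add: field_simps power2_eq_square)
    then show False using H[of 1] by (simp add: sum_power2_eq_zero_iff)
  qed
  moreover have "h 1 z \<noteq> h 3 z" "h 2 z \<noteq> h 3 z" using h1 h2 H by simp_all
  ultimately show ?thesis using exhaust_3[of a] exhaust_3[of b] assms(4) by auto
qed

lemma coordinate_differentiable_associated_h:
  assumes "open U" "triply_orthogonal U f" "triply_orthogonal U fhat" "associated_system U f h fhat"
  shows "coordinate_differentiable_on U (h m)"
proof (rule coordinate_differentiable_on_cong[OF assms(1)])
  note Lf = smooth_onD(2)[OF triply_orthogonalD(1)[OF assms(2)]]
    and Lh = smooth_onD(2)[OF triply_orthogonalD(1)[OF assms(3)]]
  show "coordinate_differentiable_on U (\<lambda>y. (pd m fhat y \<bullet> pd m f y) / (pd m f y \<bullet> pd m f y))"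
    by (intro coordinate_differentiable_on_divide coordinate_differentiable_on_inner Lf Lh)
       (use triply_orthogonal_pd_nonzero[OF assms(2)] in auto)
  show "h m y = (pd m fhat y \<bullet> pd m f y) / (pd m f y \<bullet> pd m f y)" if "y \<in> U" for y
    using associated_system_pd[OF assms(4) that] triply_orthogonal_pd_nonzero[OF assms(2) that]
    by simp
qed

lemma associated_system_mixed_pd:
  assumes "open U" "triply_orthogonal U f" "triply_orthogonal U fhat"
    and "associated_system U f h fhat" "z \<in> U" "j \<noteq> i"
  shows "pd j (pd i fhat) z = h i z *\<^sub>R pd j (pd i f) z + pd j (h i) z *\<^sub>R pd i f z"
    and "pd j (pd i fhat) z \<bullet> pd i f z = h j z * (pd j (pd i f) z \<bullet> pd i f z)"
proof -
  have smf: "smooth_on U f" and smh: "smooth_on U fhat"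
    using assms(2,3) by (simp_all add: triply_orthogonalD(1))
  have expand: "pd b (pd a fhat) z = h a z *\<^sub>R pd b (pd a f) z + pd b (h a) z *\<^sub>R pd a f z" for a b
  proof -
    have "pd b (pd a fhat) z = pd b (\<lambda>y. h a y *\<^sub>R pd a f y) z"
      by (rule pd_cong[OF assms(1,5)]) (rule associated_system_pd[OF assms(4)])
    also have "\<dots> = h a z *\<^sub>R pd b (pd a f) z + pd b (h a) z *\<^sub>R pd a f z"
      by (rule pd_scaleR[OF coordinate_differentiable_associated_h[OF assms(1-4)]
            smooth_onD(2)[OF smf] assms(5)])
    finally show ?thesis .
  qed
  then show "pd j (pd i fhat) z = h i z *\<^sub>R pd j (pd i f) z + pd j (h i) z *\<^sub>R pd i f z" .
  have "pd j (pd i fhat) z = pd i (pd j fhat) z" by (rule pd_commute[OF assms(1,5) smh])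
  also have "\<dots> = h j z *\<^sub>R pd j (pd i f) z + pd i (h j) z *\<^sub>R pd j f z"
    using expand[where a = j and b = i] pd_commute[OF assms(1,5) smf, of i j] by simp
  finally show "pd j (pd i fhat) z \<bullet> pd i f z = h j z * (pd j (pd i f) z \<bullet> pd i f z)"
    using triply_orthogonalD(3)[OF assms(2,5) assms(6)] by (simp add: inner_add_left)
qed

lemma associated_system_pd_eq_0_iff:
  assumes "open U" "triply_orthogonal U f" "triply_orthogonal U fhat"
    and "associated_system U f h fhat" "z \<in> U" "j \<noteq> i"
  shows "pd j (metric_coeff fhat i) z = 0 \<longleftrightarrow> pd j (metric_coeff f i) z = 0"
    and "pd j (h i) z = 0 \<longleftrightarrow> pd j (metric_coeff f i) z = 0"
proof -
  define c where "c = pd j (pd i f) z \<bullet> pd i f z"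
  note mixed = associated_system_mixed_pd[OF assms]
  have f: "pd j (metric_coeff f i) z = 2 * c"
    unfolding c_def by (rule pd_metric_coeff[OF triply_orthogonalD(1)[OF assms(2)] assms(5)])
  have "pd j (metric_coeff fhat i) z = 2 * (pd j (pd i fhat) z \<bullet> pd i fhat z)"
    by (rule pd_metric_coeff[OF triply_orthogonalD(1)[OF assms(3)] assms(5)])
  also have "\<dots> = 2 * (h i z * h j z * c)"
    using mixed(2) associated_system_pd[OF assms(4,5), of i] by (simp add: c_def)
  finally have fhat: "pd j (metric_coeff fhat i) z = 2 * (h i z * h j z * c)" .
  have "h i z * c + pd j (h i) z * (pd i f z \<bullet> pd i f z) = h j z * c"
    using mixed by (simp add: c_def inner_add_left)
  then have h: "pd j (h i) z * (pd i f z \<bullet> pd i f z) = (h j z - h i z) * c"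
    by (simp add: algebra_simps)
  show "pd j (metric_coeff fhat i) z = 0 \<longleftrightarrow> pd j (metric_coeff f i) z = 0"
    using f fhat associated_system_h_nonzero[OF assms(3,4,5)] by simp
  show "pd j (h i) z = 0 \<longleftrightarrow> pd j (metric_coeff f i) z = 0"
    using f h associated_system_h_distinct[OF assms(2,4,5,6)]
      triply_orthogonal_pd_nonzero[OF assms(2,5), of i]
    by auto
qed

theorem corollary4p5:
  fixes U :: "(real^3) set" and f fhat :: "real^3 \<Rightarrow> real^3"
    and h :: "3 \<Rightarrow> real^3 \<Rightarrow> real" and i :: 3
  assumes "open U" and "connected U"
    and "guichard_net U f"
    and "associated_system U f h fhat"
    and "triply_orthogonal U fhat"
  shows "(parallel_family U f i \<longleftrightarrow> parallel_family U fhat i)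
       \<and> (parallel_family U fhat i \<longleftrightarrow>
            (\<forall>x\<in>U. pd (i+1) (h i) x = 0 \<and> pd (i+2) (h i) x = 0))"
proof -
  have f: "triply_orthogonal U f" using assms(3) by (simp add: guichard_net_def)
  note pd_iff = associated_system_pd_eq_0_iff[OF assms(1) f assms(5,4)]
  show ?thesis
    unfolding parallel_family_iff_pd_metric_coeff_eq_0[OF assms(1) f]
      parallel_family_iff_pd_metric_coeff_eq_0[OF assms(1,5)]
    using pd_iff[OF _ cyclic_indices_distinct(1)] pd_iff[OF _ cyclic_indices_distinct(2)]
    by auto
qed

end
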